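(* Let $g(x)=\left(1+\frac{1}{x}\right)^{x}$ for $x>0$. There is an expansion $g(x)=\sum_{j=0}^{\infty}\frac{c_j}{x^j}$ which converges for $x>1$, where the coefficients $c_j$ are given recursively by $c_0=e$ and $$c_{j+1}=\frac{1}{j+1}\sum_{l=0}^{j}(-1)^{j-l+1}\left(\frac{j-l+1}{j-l+2}\right)c_l\qquad (j=0,1,2,\dots).$$ Moreover, as $j\to\infty$, $$c_j=(-1)^j\left(1+\frac{1}{j}\right)+\mathcal{O}\!\left(\frac{\ln j}{j^2}\right).$$
   Context: Here $e$ is Euler's number. The expansion is the (asymptotic, and in fact convergent) expansion of $g(x)$ in powers of $1/x$ for large $x$; equivalently, $c_j$ are the Maclaurin coefficients of $f(z)=(1+z)^{1/z}=\exp\{z^{-1}\ln(1+z)\}$, with the removable singularity at $z=0$ filled in by $f(0)=e$. *)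

theory Defs
  imports "HOL-Analysis.Analysis" "HOL-Library.Landau_Symbols"
begin

fun coeff_c :: "nat \<Rightarrow> real" where
  "coeff_c 0 = exp 1"
| "coeff_c (Suc j) =
     (1 / real (j + 1)) *
     (\<Sum>l\<le>j. (-1) ^ (j - l + 1) * (real (j - l + 1) / real (j - l + 2)) * coeff_c l)"

end

theory Submission
  imports Defs "HOL-Real_Asymp.Real_Asymp"
begin

(* Write a_n = (-1)^n c_n, C(z) = sum_n c_n z^n and H(z) = ln(1+z)/z = sum_k (-1)^k z^k/(k+1).
   The recursion for c_n says precisely that C' = C H' as power series; since
   C(0) = e = exp (H 0), we get C = exp H = (1+z)^(1/z) for |z| < 1, and z = 1/x gives the
   expansion. For a_n the recursion has the positive weights 1 - 1/(n-l+2), so 0 < a_n <= e.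
   Subtracting consecutive instances of it gives
     (n+2)(a_{n+2} - a_{n+1}) = - a_{n+1}/(n+3) + sum_l (a_l - a_{n+1})/((n-l+2)(n-l+3)),
   and an induction on this relation (the constant closes because harm n = O(ln n)) shows
   a_{n+1} - a_n = O(1/n^2). Hence a_n converges, and the limit is 1 by Abel's theorem:
   (1-x) sum_n a_n x^n = (1-x) C(-x) = (1-x)^(1-1/x) -> 1 as x -> 1-. Feeding
   a_n = 1 + O(1/n) back into the relation shows that a_n - 1/(n+1) has increments
   O(ln n/n^3), whose tails sum to O(ln n/n^2). *)

lemma summable_norm_powser_bounded:
  fixes f :: "nat \<Rightarrow> 'a :: real_normed_field"
  assumes "\<And>n. norm (f n) \<le> M" and "norm x < 1"
  shows "summable (\<lambda>n. norm (f n * x ^ n))"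
proof (rule summable_comparison_test' [where N = 0])
  show "summable (\<lambda>n. M * norm x ^ n)"
    using assms(2) by (intro summable_mult summable_geometric) simp
  show "norm (norm (f n * x ^ n)) \<le> M * norm x ^ n" for n
    using assms(1) [of n] by (simp add: norm_mult norm_power mult_right_mono)
qed

lemma summable_powser_bounded:
  fixes f :: "nat \<Rightarrow> 'a :: {real_normed_field, banach}"
  assumes "\<And>n. norm (f n) \<le> M" and "norm x < 1"
  shows "summable (\<lambda>n. f n * x ^ n)"
  using summable_norm_powser_bounded [OF assms] by (rule summable_norm_cancel)

lemma summable_norm_powser_diffs_bounded:
  fixes f :: "nat \<Rightarrow> 'a :: {real_normed_field, banach}"
  assumes "\<And>n. norm (f n) \<le> M" and "norm x < 1"
  shows "summable (\<lambda>n. norm (diffs f n * x ^ n))"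
proof -
  define K where "K = (norm x + 1) / 2"
  have K: "norm x < K" "K < 1" "0 < K"
    using assms(2) by (auto simp: K_def add_nonneg_pos)
  have "summable (\<lambda>n. diffs f n * of_real K ^ n)"
    using K by (intro termdiff_converges [where K = 1] summable_powser_bounded [OF assms(1)]) auto
  then show ?thesis
    using K by (intro powser_insidea [where x = "of_real K"]) auto
qed

lemma powser_mult_Cauchy:
  fixes a b :: "nat \<Rightarrow> 'a :: {real_normed_field, banach}"
  assumes "summable (\<lambda>n. norm (a n * x ^ n))" and "summable (\<lambda>n. norm (b n * x ^ n))"
  shows "(\<Sum>n. a n * x ^ n) * (\<Sum>n. b n * x ^ n) = (\<Sum>n. (\<Sum>i\<le>n. a i * b (n - i)) * x ^ n)"
proof -
  have "(\<Sum>i\<le>n. a i * x ^ i * (b (n - i) * x ^ (n - i))) = (\<Sum>i\<le>n. a i * b (n - i) * x ^ n)" for n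
    by (intro sum.cong refl) (simp add: mult_ac flip: power_add)
  then have "(\<Sum>i\<le>n. a i * x ^ i * (b (n - i) * x ^ (n - i))) = (\<Sum>i\<le>n. a i * b (n - i)) * x ^ n" for n
    by (simp add: sum_distrib_right)
  then show ?thesis
    using Cauchy_product [OF assms] by simp
qed

lemma linear_ode_solution_eq_exp:
  fixes f g g' :: "real \<Rightarrow> real"
  assumes "convex S"
    and "\<And>y. y \<in> S \<Longrightarrow> (f has_real_derivative f y * g' y) (at y)"
    and "\<And>y. y \<in> S \<Longrightarrow> (g has_real_derivative g' y) (at y)"
    and "x0 \<in> S" and "x \<in> S"
  shows "f x = f x0 * exp (g x - g x0)"
proof -
  have "\<exists>c. \<forall>y\<in>S. f y * exp (- g y) = c"
  proof (rule has_field_derivative_zero_constant [OF assms(1)])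
    fix y assume "y \<in> S"
    have "((\<lambda>y. f y * exp (- g y)) has_real_derivative
        f y * (exp (- g y) * - g' y) + f y * g' y * exp (- g y)) (at y)"
      using assms(2,3) [OF \<open>y \<in> S\<close>] by (intro derivative_eq_intros) auto
    then show "((\<lambda>y. f y * exp (- g y)) has_real_derivative 0) (at y within S)"
      by (auto intro: has_field_derivative_at_within simp: algebra_simps)
  qed
  then have "f x * exp (- g x) = f x0 * exp (- g x0)"
    using assms(4,5) by metis
  then show ?thesis
    by (simp add: exp_diff exp_minus field_simps)
qed

lemma continuous_on_powser_summable_norm:
  fixes b :: "nat \<Rightarrow> 'a :: {real_normed_field, banach}"
  assumes "summable (\<lambda>n. norm (b n))"
  shows "continuous_on (cball 0 1) (\<lambda>x. \<Sum>n. b n * x ^ n)"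
proof (rule uniform_limit_theorem [OF _ Weierstrass_m_test [OF _ assms]])
  show "\<forall>\<^sub>F N in sequentially. continuous_on (cball 0 1) (\<lambda>x. \<Sum>n<N. b n * x ^ n)"
    by (intro always_eventually allI continuous_intros)
  show "norm (b n * x ^ n) \<le> norm (b n)" if "x \<in> cball 0 1" for n x
    using that by (simp add: norm_mult norm_power mult_left_le power_le_one)
qed simp

lemma sums_one_minus_mult_powser:
  fixes a :: "nat \<Rightarrow> 'a :: real_normed_field"
  assumes "(\<lambda>n. a n * x ^ n) sums A"
  shows "(\<lambda>n. (a n - (if n = 0 then 0 else a (n - 1))) * x ^ n) sums ((1 - x) * A)"
proof -
  define g where "g n = (if n = 0 then 0 else a (n - 1) * x ^ n)" for n
  have "(\<lambda>n. g (Suc n)) sums (x * A)"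
    using sums_mult [OF assms, of x] by (simp add: g_def mult_ac)
  then have "g sums (x * A + g 0)"
    by (simp only: sums_Suc_iff)
  then have "g sums (x * A)"
    by (simp add: g_def)
  from sums_diff [OF assms this] have "(\<lambda>n. a n * x ^ n - g n) sums ((1 - x) * A)"
    by (simp add: algebra_simps)
  moreover have "a n * x ^ n - g n = (a n - (if n = 0 then 0 else a (n - 1))) * x ^ n" for n
    by (simp add: g_def algebra_simps)
  ultimately show ?thesis
    by simp
qed

(* Abel's theorem, applied to the absolutely summable differences a_n - a_(n-1). *)
lemma tendsto_one_minus_mult_powser_at_left_1:
  fixes a :: "nat \<Rightarrow> real"
  assumes "summable (\<lambda>n. \<bar>a (Suc n) - a n\<bar>)" and "a \<longlonglongrightarrow> L"
  shows "((\<lambda>x. (1 - x) * (\<Sum>n. a n * x ^ n)) \<longlongrightarrow> L) (at_left 1)"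
proof -
  define b where "b n = a n - (if n = 0 then 0 else a (n - 1))" for n
  have "summable (\<lambda>n. norm (b n))"
    using assms(1) summable_Suc_iff [of "\<lambda>n. norm (b n)"] by (simp add: b_def)
  then have "continuous_on {0..1} (\<lambda>x. \<Sum>n. b n * x ^ n)"
    by (rule continuous_on_subset [OF continuous_on_powser_summable_norm]) (auto simp: dist_real_def)
  then have "((\<lambda>x. \<Sum>n. b n * x ^ n) \<longlongrightarrow> (\<Sum>n. b n * 1 ^ n)) (at 1 within {0..1})"
    unfolding continuous_on_def by (rule bspec) simp
  then have "((\<lambda>x. \<Sum>n. b n * x ^ n) \<longlongrightarrow> (\<Sum>n. b n)) (at_left 1)"
    by (simp add: at_within_Icc_at_left)
  moreover have "b sums L"
  proof -
    have "(\<Sum>i<Suc N. b i) = a N" for N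
      by (induction N) (simp_all add: b_def)
    then have "(\<lambda>N. \<Sum>i<Suc N. b i) \<longlonglongrightarrow> L"
      using assms(2) by simp
    then show ?thesis
      unfolding sums_def by (rule LIMSEQ_imp_Suc)
  qed
  moreover have "(\<Sum>n. b n * x ^ n) = (1 - x) * (\<Sum>n. a n * x ^ n)" if "x \<in> {0<..<1}" for x
  proof -
    obtain M where "\<And>n. norm (a n) \<le> M"
      using BseqE [OF convergent_imp_Bseq [OF convergentI [OF assms(2)]]] by blast
    then have "(\<lambda>n. a n * x ^ n) sums (\<Sum>n. a n * x ^ n)"
      using that by (intro summable_sums summable_powser_bounded) auto
    from sums_one_minus_mult_powser [OF this] show ?thesis
      by (simp add: b_def sums_iff)
  qed
  then have "eventually (\<lambda>x. (\<Sum>n. b n * x ^ n) = (1 - x) * (\<Sum>n. a n * x ^ n)) (at_left 1)"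
    using eventually_at_left_real [of 0 "1 :: real"] by (auto elim: eventually_mono)
  ultimately show ?thesis
    by (simp add: sums_iff Lim_transform_eventually)
qed

lemma abs_diff_le_telescoping:
  fixes x w :: "nat \<Rightarrow> real"
  assumes "n \<le> m" and "\<And>k. n \<le> k \<Longrightarrow> k < m \<Longrightarrow> \<bar>x (Suc k) - x k\<bar> \<le> w k - w (Suc k)"
  shows "\<bar>x m - x n\<bar> \<le> w n - w m"
  using assms
proof (induction m rule: dec_induct)
  case (step m)
  then have "\<bar>x (Suc m) - x m\<bar> \<le> w m - w (Suc m)" and "\<bar>x m - x n\<bar> \<le> w n - w m"
    by auto
  then show ?case
    by linarith
qed simp

lemma summable_abs_diff_telescoping:
  fixes x w :: "nat \<Rightarrow> real"
  assumes "w \<longlonglongrightarrow> 0" and "\<And>k. n \<le> k \<Longrightarrow> \<bar>x (Suc k) - x k\<bar> \<le> w k - w (Suc k)"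
  shows "summable (\<lambda>k. \<bar>x (Suc k) - x k\<bar>)"
  using telescope_summable' [OF assms(1)]
  by (rule summable_comparison_test' [where N = n]) (simp add: assms(2))

lemma convergent_if_summable_abs_diff:
  fixes x :: "nat \<Rightarrow> real"
  assumes "summable (\<lambda>k. \<bar>x (Suc k) - x k\<bar>)"
  shows "convergent x"
proof -
  have "convergent (\<lambda>m. \<Sum>k<m. x (Suc k) - x k)"
    using summable_rabs_cancel [OF assms] by (simp add: summable_iff_convergent)
  then show ?thesis
    by (simp add: sum_lessThan_telescope convergent_diff_const_right_iff)
qed

lemma abs_diff_lim_le_telescoping:
  fixes x w :: "nat \<Rightarrow> real"
  assumes "x \<longlonglongrightarrow> L" and "w \<longlonglongrightarrow> 0"
    and "\<And>k. n \<le> k \<Longrightarrow> \<bar>x (Suc k) - x k\<bar> \<le> w k - w (Suc k)"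
  shows "\<bar>x n - L\<bar> \<le> w n"
proof -
  have "(\<lambda>m. \<bar>x m - x n\<bar>) \<longlonglongrightarrow> \<bar>L - x n\<bar>"
    using assms(1) by (intro tendsto_intros)
  moreover have "(\<lambda>m. w n - w m) \<longlonglongrightarrow> w n - 0"
    using assms(2) by (intro tendsto_intros)
  moreover have "\<forall>m\<ge>n. \<bar>x m - x n\<bar> \<le> w n - w m"
    using assms(3) by (auto intro: abs_diff_le_telescoping)
  ultimately have "\<bar>L - x n\<bar> \<le> w n - 0"
    by (intro LIMSEQ_le) auto
  then show ?thesis
    by simp
qed

lemma divide_consecutive_product_eq_diff:
  "0 < j \<Longrightarrow> C / (real j * (real j + 1)) = C / real j - C / real (Suc j)"
  by (simp add: field_simps)

lemma abs_diff_le_of_step_le: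
  fixes x :: "nat \<Rightarrow> real"
  assumes "1 \<le> l" and "l \<le> m"
    and "\<And>j. l \<le> j \<Longrightarrow> j < m \<Longrightarrow> \<bar>x (Suc j) - x j\<bar> \<le> C / (real j * (real j + 1))"
  shows "\<bar>x l - x m\<bar> \<le> C * (1 / real l - 1 / real m)"
  using abs_diff_le_telescoping [of l m x "\<lambda>j. C / real j"] assms
  by (simp add: abs_minus_commute divide_consecutive_product_eq_diff right_diff_distrib)

lemma harm_le_1_plus_ln: "1 \<le> n \<Longrightarrow> harm n \<le> 1 + ln (real n)"
  using euler_mascheroni_sequence_decreasing [of 1 n] by (simp add: harm_def)

lemma harm_le_1_plus_ln_add_2: "harm n \<le> 1 + ln (real n + 2)"
proof -
  have "harm n \<le> (harm (n + 1) :: real)"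
    by (rule harm_mono) simp
  also have "\<dots> \<le> 1 + ln (real n + 1)"
    using harm_le_1_plus_ln [of "n + 1"] by (simp add: add.commute)
  also have "\<dots> \<le> 1 + ln (real n + 2)"
    by simp
  finally show ?thesis .
qed

lemma sum_inverse_shifted_products:
  "(\<Sum>l\<le>n. 1 / ((real l + 2) * (real l + 3))) = 1 / 2 - 1 / (real n + 3)"
proof (induction n)
  case (Suc n)
  have "1 / ((real n + 3) * (real n + 4)) = 1 / (real n + 3) - 1 / (real n + 4)"
    by (simp add: field_simps)
  with Suc show ?case
    by (simp add: algebra_simps)
qed simp

lemma sum_inverse_complementary_products:
  "(\<Sum>l=1..n. 1 / (real l * real (n + 1 - l))) = 2 * harm n / (real n + 1)"
proof -
  have partial_fractions: "1 / (a * b) = (1 / a + 1 / b) / (a + b)" if "a > 0" "b > 0" for a b :: real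
    using that mult_pos_pos [OF mult_pos_pos [OF that] add_pos_pos [OF that]]
    by (simp add: field_simps)
  have "(\<Sum>l=1..n. 1 / (real l * real (n + 1 - l))) =
      (\<Sum>l=1..n. (1 / real l + 1 / real (n + 1 - l)) / (real n + 1))"
  proof (rule sum.cong)
    fix l assume l: "l \<in> {1..n}"
    then have "real l + real (n + 1 - l) = real n + 1"
      by (simp add: of_nat_diff)
    with l partial_fractions [of "real l" "real (n + 1 - l)"]
    show "1 / (real l * real (n + 1 - l)) = (1 / real l + 1 / real (n + 1 - l)) / (real n + 1)"
      by simp
  qed simp
  also have "\<dots> = ((\<Sum>l=1..n. 1 / real l) + (\<Sum>l=1..n. 1 / real (n + 1 - l))) / (real n + 1)"
    by (simp only: sum_divide_distrib [symmetric] sum.distrib)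
  also have "(\<Sum>l=1..n. 1 / real (n + 1 - l)) = (\<Sum>l=1..n. 1 / real l)"
    using sum.atLeastAtMost_rev [of "\<lambda>l. 1 / real l" 1 n] by simp
  also have "(\<Sum>l=1..n. 1 / real l) = harm n"
    by (simp add: harm_def divide_inverse)
  finally show ?thesis
    by simp
qed

lemma inverse_diff_over_products_le:
  fixes L N :: real
  assumes "1 \<le> L" and "L \<le> N"
  shows "(1 / L - 1 / (N + 1)) / ((N - L + 2) * (N - L + 3)) \<le> 1 / (L * (N + 1 - L) * (N + 3))"
proof -
  define u where "u = N + 1 - L"
  have u: "1 \<le> u" "N = L + u - 1"
    using assms by (auto simp: u_def)
  have "u * u * (L + u + 2) \<le> (L + u) * (u + 1) * (u + 2)"
    using u assms by (simp add: algebra_simps)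
  then show ?thesis
    using u assms by (simp add: divide_simps) (simp add: algebra_simps)
qed

(* A stand-in for ln m / m^2 that stays positive at m = 1. *)
definition log_weight :: "nat \<Rightarrow> real" where
  "log_weight m = (1 + ln (real m + 1)) / (real m * (real m + 1))"

lemma log_weight_decrement:
  assumes "1 \<le> m"
  shows "(1 + ln (real m + 1)) / (real m * (real m + 1) * (real m + 2)) \<le>
    log_weight m - log_weight (Suc m)"
proof -
  define M where "M = real m"
  have M: "1 \<le> M"
    using assms by (simp add: M_def)
  have "1 + 1 / (M + 1) = (M + 2) / (M + 1)"
    using M by (simp add: field_simps)
  then have "ln (M + 2) - ln (M + 1) = ln (1 + 1 / (M + 1))"
    using M by (simp add: ln_div)
  also have "\<dots> \<le> 1 / (M + 1)"
    using M by (intro ln_add_one_self_le_self) simp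
  finally have "M * (ln (M + 2) - ln (M + 1)) \<le> M * (1 / (M + 1))"
    using M by (intro mult_left_mono) auto
  also have "\<dots> \<le> 1"
    using M by (simp add: field_simps)
  finally have "M * (ln (M + 2) - ln (M + 1)) \<le> 1" .
  moreover have "0 \<le> ln (M + 1)"
    using M by simp
  ultimately have "1 + ln (M + 1) \<le> (1 + ln (M + 1)) * (M + 2) - (1 + ln (M + 2)) * M"
    by (simp add: algebra_simps)
  then have "(1 + ln (M + 1)) / (M * (M + 1) * (M + 2)) \<le>
      ((1 + ln (M + 1)) * (M + 2) - (1 + ln (M + 2)) * M) / (M * (M + 1) * (M + 2))"
    using M by (intro divide_right_mono) auto
  also have "\<dots> = (1 + ln (M + 1)) / (M * (M + 1)) - (1 + ln (M + 2)) / ((M + 1) * (M + 2))"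
    using M by (simp add: divide_simps)
  finally show ?thesis
    by (simp add: M_def log_weight_def algebra_simps)
qed

section \<open>The coefficients and their generating function\<close>

definition coeff_a :: "nat \<Rightarrow> real" where
  "coeff_a n = (-1) ^ n * coeff_c n"

lemma coeff_c_eq_coeff_a: "coeff_c n = (-1) ^ n * coeff_a n"
  by (simp add: coeff_a_def)

lemma coeff_a_Suc:
  "real (Suc n) * coeff_a (Suc n) = (\<Sum>l\<le>n. (1 - 1 / real (n - l + 2)) * coeff_a l)"
proof -
  have "real (Suc n) * coeff_a (Suc n) =
      (\<Sum>l\<le>n. (-1) ^ Suc n * (-1) ^ (n - l + 1) * (real (n - l + 1) / real (n - l + 2)) * coeff_c l)"
    by (simp add: coeff_a_def sum_distrib_left mult_ac)
  also have "\<dots> = (\<Sum>l\<le>n. (1 - 1 / real (n - l + 2)) * coeff_a l)"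
  proof (rule sum.cong)
    fix l assume "l \<in> {..n}"
    then have "(-1 :: real) ^ (n - l + 1) * (-1) ^ l = (-1) ^ Suc n"
      by (simp add: power_add [symmetric])
    moreover have "(-1 :: real) ^ Suc n * (-1) ^ Suc n = 1"
      by (simp add: power_add [symmetric] flip: mult_2)
    moreover have "(-1 :: real) ^ Suc n * (-1) ^ (n - l + 1) * coeff_c l =
        (-1) ^ Suc n * ((-1) ^ (n - l + 1) * (-1) ^ l) * coeff_a l"
      by (simp add: coeff_c_eq_coeff_a mult_ac)
    ultimately have "(-1 :: real) ^ Suc n * (-1) ^ (n - l + 1) * coeff_c l = coeff_a l"
      by simp
    then show "(-1) ^ Suc n * (-1) ^ (n - l + 1) * (real (n - l + 1) / real (n - l + 2)) * coeff_c l =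
        (1 - 1 / real (n - l + 2)) * coeff_a l"
      by (simp add: field_simps)
  qed simp
  finally show ?thesis .
qed

lemma coeff_a_pos: "coeff_a n > 0"
proof (induction n rule: less_induct)
  case (less n)
  show ?case
  proof (cases n)
    case 0
    then show ?thesis by (simp add: coeff_a_def)
  next
    case (Suc m)
    have "(\<Sum>l\<le>m. (1 - 1 / real (m - l + 2)) * coeff_a l) > 0"
    proof (rule sum_pos)
      fix l assume "l \<in> {..m}"
      have "1 - 1 / real (m - l + 2) > 0"
        by (simp add: field_simps)
      then show "(1 - 1 / real (m - l + 2)) * coeff_a l > 0"
        using less Suc \<open>l \<in> {..m}\<close> by simp
    qed simp_all
    then have "real (Suc m) * coeff_a (Suc m) > 0"
      by (simp only: coeff_a_Suc)
    then show ?thesis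
      using Suc by (simp add: zero_less_mult_iff)
  qed
qed

lemma coeff_a_le_exp1: "coeff_a n \<le> exp 1"
proof (induction n rule: less_induct)
  case (less n)
  show ?case
  proof (cases n)
    case 0
    then show ?thesis by (simp add: coeff_a_def)
  next
    case (Suc m)
    have "real (Suc m) * coeff_a (Suc m) \<le> (\<Sum>l\<le>m. coeff_a l)"
      unfolding coeff_a_Suc
      by (intro sum_mono) (simp add: algebra_simps less_imp_le [OF coeff_a_pos])
    also have "\<dots> \<le> (\<Sum>l\<le>m. exp 1)"
      using less Suc by (intro sum_mono) simp
    finally show ?thesis
      using Suc by (simp add: mult.commute)
  qed
qed

lemma abs_coeff_a_diff_le_exp1: "\<bar>coeff_a i - coeff_a j\<bar> \<le> exp 1"
  using coeff_a_pos [of i] coeff_a_pos [of j] coeff_a_le_exp1 [of i] coeff_a_le_exp1 [of j]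
  by linarith

lemma abs_coeff_c_le_exp1: "\<bar>coeff_c n\<bar> \<le> exp 1"
  using coeff_a_le_exp1 [of n] coeff_a_pos [of n] by (simp add: coeff_c_eq_coeff_a abs_mult)

definition coeff_h :: "nat \<Rightarrow> real" where
  "coeff_h k = (-1) ^ k / real (Suc k)"

lemma abs_coeff_h_le: "\<bar>coeff_h n\<bar> \<le> 1"
  by (simp add: coeff_h_def abs_mult)

lemma coeff_h_sums:
  assumes "\<bar>x\<bar> < 1" and "x \<noteq> 0"
  shows "(\<lambda>n. coeff_h n * x ^ n) sums (ln (1 + x) / x)"
proof -
  have "(\<lambda>n. - ((-x) ^ n) / real n) sums ln (1 + x)"
    using assms by (intro ln_series') auto
  then have "(\<lambda>n. - ((-x) ^ Suc n) / real (Suc n)) sums ln (1 + x)"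
    by (subst sums_Suc_iff) simp
  moreover have "- ((-x) ^ Suc n) / real (Suc n) = x * (coeff_h n * x ^ n)" for n
    by (simp add: coeff_h_def power_minus [of x])
  ultimately have "(\<lambda>n. x * (coeff_h n * x ^ n) / x) sums (ln (1 + x) / x)"
    by (intro sums_divide) simp
  then show ?thesis
    using assms(2) by simp
qed

(* The defining recursion of coeff_c, read as C' = C H' for the generating functions. *)
lemma diffs_coeff_c: "diffs coeff_c n = (\<Sum>l\<le>n. coeff_c l * diffs coeff_h (n - l))"
  by (simp add: diffs_def coeff_h_def Suc_diff_le mult_ac)

lemma powser_coeff_c_eq_exp:
  assumes "\<bar>x\<bar> < 1"
  shows "(\<Sum>n. coeff_c n * x ^ n) = exp (\<Sum>n. coeff_h n * x ^ n)"
proof -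
  define C where "C y = (\<Sum>n. coeff_c n * y ^ n)" for y :: real
  define H where "H y = (\<Sum>n. coeff_h n * y ^ n)" for y :: real
  define H' where "H' y = (\<Sum>n. diffs coeff_h n * y ^ n)" for y :: real
  have "C x = C 0 * exp (H x - H 0)"
  proof (rule linear_ode_solution_eq_exp [of "{-1<..<1}"])
    fix y :: real assume "y \<in> {-1<..<1}"
    then have y: "norm y < 1"
      by auto
    have "(C has_real_derivative (\<Sum>n. diffs coeff_c n * y ^ n)) (at y)"
      unfolding C_def using y abs_coeff_c_le_exp1
      by (intro termdiffs_strong' [where K = 1] summable_powser_bounded) auto
    moreover have "(\<Sum>n. diffs coeff_c n * y ^ n) = C y * H' y"
      unfolding C_def H'_def diffs_coeff_c using y abs_coeff_c_le_exp1 abs_coeff_h_le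
      by (intro powser_mult_Cauchy [symmetric] summable_norm_powser_bounded
          summable_norm_powser_diffs_bounded) auto
    ultimately show "(C has_real_derivative C y * H' y) (at y)"
      by simp
    show "(H has_real_derivative H' y) (at y)"
      unfolding H_def H'_def using y abs_coeff_h_le
      by (intro termdiffs_strong' [where K = 1] summable_powser_bounded) auto
  qed (use assms in auto)
  moreover have "C 0 = exp 1"
    by (simp add: C_def powser_zero)
  moreover have "H 0 = 1"
    unfolding H_def by (simp only: powser_zero) (simp add: coeff_h_def)
  ultimately show ?thesis
    by (simp add: C_def H_def flip: exp_add)
qed

lemma coeff_c_sums_powr:
  assumes "\<bar>x\<bar> < 1" and "x \<noteq> 0"
  shows "(\<lambda>n. coeff_c n * x ^ n) sums ((1 + x) powr (1 / x))"
proof -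
  have "(\<lambda>n. coeff_c n * x ^ n) sums (\<Sum>n. coeff_c n * x ^ n)"
    using assms(1) abs_coeff_c_le_exp1 by (intro summable_sums summable_powser_bounded) auto
  also have "(\<Sum>n. coeff_c n * x ^ n) = exp (ln (1 + x) / x)"
    using coeff_h_sums [OF assms] by (simp add: powser_coeff_c_eq_exp [OF assms(1)] sums_iff)
  also have "\<dots> = (1 + x) powr (1 / x)"
    using assms(1) by (simp add: powr_def)
  finally show ?thesis .
qed

lemma coeff_a_powser_term: "coeff_a n * x ^ n = coeff_c n * (- x) ^ n"
proof -
  have "(-1 :: real) ^ n * (-1) ^ n = 1"
    by (simp flip: power_mult_distrib)
  moreover have "coeff_c n * (- x) ^ n = ((-1) ^ n * (-1) ^ n) * (coeff_a n * x ^ n)"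
    by (simp add: coeff_c_eq_coeff_a power_minus [of x] mult_ac)
  ultimately show ?thesis
    by simp
qed

lemma one_minus_mult_powser_coeff_a_tendsto_1:
  "((\<lambda>x. (1 - x) * (\<Sum>n. coeff_a n * x ^ n)) \<longlongrightarrow> 1) (at_left 1)"
proof -
  have "(1 - x) * (1 - x) powr (- 1 / x) = (1 - x) * (\<Sum>n. coeff_a n * x ^ n)"
    if "x \<in> {0<..<1}" for x
    using coeff_c_sums_powr [of "-x"] that by (simp add: sums_iff coeff_a_powser_term)
  then have "eventually (\<lambda>x. (1 - x) * (1 - x) powr (- 1 / x) =
      (1 - x) * (\<Sum>n. coeff_a n * x ^ n)) (at_left 1)"
    using eventually_at_left_real [of 0 "1 :: real"] by (auto elim: eventually_mono)
  moreover have "((\<lambda>x :: real. (1 - x) * (1 - x) powr (- 1 / x)) \<longlongrightarrow> 1) (at_left 1)"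
    by real_asymp
  ultimately show ?thesis
    by (rule Lim_transform_eventually [rotated])
qed

section \<open>Asymptotics of the coefficients\<close>

definition coeff_a_remainder :: "nat \<Rightarrow> real" where
  "coeff_a_remainder n =
     (\<Sum>l\<le>n. (coeff_a l - coeff_a (Suc n)) / ((real (n - l) + 2) * (real (n - l) + 3)))"

lemma coeff_a_diff_eq:
  "(real n + 2) * (coeff_a (n + 2) - coeff_a (n + 1)) =
     - coeff_a (n + 1) / (real n + 3) + coeff_a_remainder n"
proof -
  define d where "d l = (real (n - l) + 2) * (real (n - l) + 3)" for l
  have "real (n + 2) * coeff_a (n + 2) =
      (\<Sum>l\<le>n. (1 - 1 / real (Suc n - l + 2)) * coeff_a l) + coeff_a (n + 1) / 2"
    using coeff_a_Suc [of "Suc n"] by simp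
  also have "(\<Sum>l\<le>n. (1 - 1 / real (Suc n - l + 2)) * coeff_a l) =
      (\<Sum>l\<le>n. (1 - 1 / (real (n - l) + 3)) * coeff_a l)"
    by (intro sum.cong refl) (simp add: Suc_diff_le)
  finally have rec2: "real (n + 2) * coeff_a (n + 2) =
      (\<Sum>l\<le>n. (1 - 1 / (real (n - l) + 3)) * coeff_a l) + coeff_a (n + 1) / 2" .
  have rec1: "real (n + 1) * coeff_a (n + 1) = (\<Sum>l\<le>n. (1 - 1 / (real (n - l) + 2)) * coeff_a l)"
    using coeff_a_Suc [of n] by (simp only: Suc_eq_plus1 of_nat_add of_nat_numeral of_nat_1)
  have "(\<Sum>l\<le>n. 1 / d l) = 1 / 2 - 1 / (real n + 3)"
    using sum.nat_diff_reindex [of "\<lambda>l. 1 / ((real l + 2) * (real l + 3))" "Suc n"]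
    by (simp add: d_def lessThan_Suc_atMost sum_inverse_shifted_products)
  moreover have "(\<Sum>l\<le>n. coeff_a l / d l) =
      (\<Sum>l\<le>n. (coeff_a l - coeff_a (n + 1)) / d l + coeff_a (n + 1) * (1 / d l))"
    by (intro sum.cong refl) (simp add: diff_divide_distrib)
  ultimately have "(\<Sum>l\<le>n. coeff_a l / d l) =
      coeff_a_remainder n + coeff_a (n + 1) * (1 / 2 - 1 / (real n + 3))"
    by (simp only: sum.distrib flip: sum_distrib_left) (simp add: coeff_a_remainder_def d_def)
  moreover have "(\<Sum>l\<le>n. (1 - 1 / (real (n - l) + 3)) * coeff_a l) -
      (\<Sum>l\<le>n. (1 - 1 / (real (n - l) + 2)) * coeff_a l) = (\<Sum>l\<le>n. coeff_a l / d l)"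
    unfolding sum_subtractf [symmetric] by (intro sum.cong refl) (simp add: d_def field_simps)
  ultimately show ?thesis
    using rec1 rec2 by (simp add: algebra_simps)
qed

lemma abs_coeff_a_remainder_le:
  assumes "\<And>j. 1 \<le> j \<Longrightarrow> j \<le> n \<Longrightarrow>
      \<bar>coeff_a (Suc j) - coeff_a j\<bar> \<le> C / (real j * (real j + 1))"
  shows "\<bar>coeff_a_remainder n\<bar> \<le>
    exp 1 / ((real n + 2) * (real n + 3)) + 2 * C * harm n / ((real n + 1) * (real n + 3))"
proof -
  define T where "T l = (coeff_a l - coeff_a (Suc n)) / ((real (n - l) + 2) * (real (n - l) + 3))" for l
  have "\<bar>coeff_a_remainder n\<bar> \<le> (\<Sum>l\<le>n. \<bar>T l\<bar>)"
    unfolding coeff_a_remainder_def T_def by (rule sum_abs)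
  also have "\<dots> = \<bar>T 0\<bar> + (\<Sum>l=1..n. \<bar>T l\<bar>)"
    by (simp add: atMost_atLeast0 sum.atLeast_Suc_atMost)
  also have "\<bar>T 0\<bar> \<le> exp 1 / ((real n + 2) * (real n + 3))"
    using abs_coeff_a_diff_le_exp1 [of 0 "Suc n"] unfolding T_def
    by (simp add: abs_divide divide_right_mono)
  also have "(\<Sum>l=1..n. \<bar>T l\<bar>) \<le> (\<Sum>l=1..n. C / (real n + 3) * (1 / (real l * real (n + 1 - l))))"
  proof (rule sum_mono)
    fix l assume l: "l \<in> {1..n}"
    have gap: "\<bar>coeff_a l - coeff_a (Suc n)\<bar> \<le> C * (1 / real l - 1 / real (Suc n))"
      using l assms by (intro abs_diff_le_of_step_le) auto
    have "1 / real (Suc n) < 1 / real l"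
      using l by (intro divide_strict_left_mono) auto
    moreover have "0 \<le> C * (1 / real l - 1 / real (Suc n))"
      using gap by (meson abs_ge_zero order_trans)
    ultimately have "0 \<le> C"
      by (simp add: zero_le_mult_iff)
    have "\<bar>T l\<bar> \<le> C * (1 / real l - 1 / real (Suc n)) / ((real (n - l) + 2) * (real (n - l) + 3))"
      using gap unfolding T_def by (simp add: abs_divide divide_right_mono)
    also have "\<dots> = C * ((1 / real l - 1 / (real n + 1)) /
        ((real n - real l + 2) * (real n - real l + 3)))"
      using l by (simp add: of_nat_diff)
    also have "\<dots> \<le> C * (1 / (real l * (real n + 1 - real l) * (real n + 3)))"
      using l \<open>0 \<le> C\<close> by (intro mult_left_mono inverse_diff_over_products_le) auto
    also have "\<dots> = C / (real n + 3) * (1 / (real l * real (n + 1 - l)))"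
      using l by (simp add: of_nat_diff)
    finally show "\<bar>T l\<bar> \<le> C / (real n + 3) * (1 / (real l * real (n + 1 - l)))" .
  qed
  also have "\<dots> = 2 * C * harm n / ((real n + 1) * (real n + 3))"
    by (simp only: sum_distrib_left [symmetric] sum_inverse_complementary_products) (simp add: mult_ac)
  finally show ?thesis
    by simp
qed

lemma coeff_a_step_bound_Suc:
  assumes C: "2 * exp 1 \<le> C" and harm: "harm n \<le> (real n + 3) / 4"
    and step: "\<And>j. 1 \<le> j \<Longrightarrow> j \<le> n \<Longrightarrow>
      \<bar>coeff_a (Suc j) - coeff_a j\<bar> \<le> C / (real j * (real j + 1))"
  shows "\<bar>coeff_a (n + 2) - coeff_a (n + 1)\<bar> \<le> C / ((real n + 1) * (real n + 2))"
proof -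
  define X where "X = real n"
  have nz: "X + 1 \<noteq> 0" "X + 2 \<noteq> 0" "X + 3 \<noteq> 0"
    by (simp_all add: X_def add_nonneg_pos)
  have C0: "0 \<le> C"
    using C exp_ge_zero [of 1] by linarith
  have R: "\<bar>coeff_a_remainder n\<bar> \<le>
      exp 1 / ((X + 2) * (X + 3)) + 2 * C * harm n / ((X + 1) * (X + 3))"
    unfolding X_def using step by (rule abs_coeff_a_remainder_le)
  have "2 * C * harm n / ((X + 1) * (X + 3)) \<le> 2 * C * ((X + 3) / 4) / ((X + 1) * (X + 3))"
    using C0 harm by (intro divide_right_mono mult_left_mono) (auto simp: X_def)
  also have "\<dots> = C / (2 * (X + 1))"
    using nz by (simp add: divide_simps)
  finally have R': "\<bar>coeff_a_remainder n\<bar> \<le> exp 1 / ((X + 2) * (X + 3)) + C / (2 * (X + 1))"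
    using R by linarith
  have "(X + 2) * (coeff_a (n + 2) - coeff_a (n + 1)) =
      - (coeff_a (n + 1) / (X + 3)) + coeff_a_remainder n"
    using coeff_a_diff_eq [of n] by (simp add: X_def)
  then have "(X + 2) * \<bar>coeff_a (n + 2) - coeff_a (n + 1)\<bar> =
      \<bar>- (coeff_a (n + 1) / (X + 3)) + coeff_a_remainder n\<bar>"
    by (metis X_def abs_mult abs_of_nonneg add_nonneg_nonneg of_nat_0_le_iff zero_le_numeral)
  also have "\<dots> \<le> coeff_a (n + 1) / (X + 3) + \<bar>coeff_a_remainder n\<bar>"
    using abs_triangle_ineq [of "- (coeff_a (n + 1) / (X + 3))" "coeff_a_remainder n"]
      coeff_a_pos [of "n + 1"] by (simp add: X_def)
  also have "\<dots> \<le> exp 1 / (X + 3) + (exp 1 / ((X + 2) * (X + 3)) + C / (2 * (X + 1)))"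
    using coeff_a_le_exp1 [of "n + 1"] R'
    by (intro add_mono divide_right_mono) (simp_all add: X_def)
  also have "\<dots> = exp 1 / (X + 2) + C / (2 * (X + 1))"
    using nz by (simp add: divide_simps) (simp add: algebra_simps)
  also have "exp 1 / (X + 2) \<le> (C / 2) / (X + 1)"
    using C C0 by (intro frac_le) (simp_all add: X_def add_nonneg_pos)
  also have "(C / 2) / (X + 1) + C / (2 * (X + 1)) = C / (X + 1)"
    using nz by (simp add: divide_simps)
  finally have "(X + 2) * \<bar>coeff_a (n + 2) - coeff_a (n + 1)\<bar> \<le> C / (X + 1)"
    by simp
  then show ?thesis
    using nz by (simp add: X_def divide_simps mult_ac)
qed

lemma coeff_a_step_bound_induct:
  assumes C: "2 * exp 1 \<le> C"
    and harm: "\<And>n. N < n \<Longrightarrow> harm n \<le> (real n + 3) / 4"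
    and base: "\<And>j. 1 \<le> j \<Longrightarrow> j \<le> N + 1 \<Longrightarrow>
      \<bar>coeff_a (Suc j) - coeff_a j\<bar> \<le> C / (real j * (real j + 1))"
    and "1 \<le> j"
  shows "\<bar>coeff_a (Suc j) - coeff_a j\<bar> \<le> C / (real j * (real j + 1))"
  using \<open>1 \<le> j\<close>
proof (induction j rule: less_induct)
  case (less j)
  show ?case
  proof (cases "j \<le> N + 1")
    case True
    then show ?thesis
      using base less.prems by blast
  next
    case False
    define n where "n = j - 1"
    have n: "j = Suc n" "N < n"
      using False by (simp_all add: n_def)
    have "harm n \<le> (real n + 3) / 4"
      using harm n(2) by blast
    moreover have "\<bar>coeff_a (Suc i) - coeff_a i\<bar> \<le> C / (real i * (real i + 1))"
      if "1 \<le> i" "i \<le> n" for i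
      using less.IH [of i] that n(1) by simp
    ultimately have "\<bar>coeff_a (n + 2) - coeff_a (n + 1)\<bar> \<le> C / ((real n + 1) * (real n + 2))"
      using C by (intro coeff_a_step_bound_Suc)
    then show ?thesis
      using n(1) by (simp add: add.commute)
  qed
qed

lemma coeff_a_step_bound:
  "\<exists>C. \<forall>j\<ge>1. \<bar>coeff_a (Suc j) - coeff_a j\<bar> \<le> C / (real j * (real j + 1))"
proof -
  have "eventually (\<lambda>n. 1 + ln (real n) \<le> (real n + 3) / 4) at_top"
    by real_asymp
  then obtain N where N: "\<And>n. N \<le> n \<Longrightarrow> 1 + ln (real n) \<le> (real n + 3) / 4"
    by (auto simp: eventually_at_top_linorder)
  define C where "C = exp 1 * (real N + 2) ^ 2"
  have "(2 :: real) ^ 2 \<le> (real N + 2) ^ 2"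
    using power_mono [of 2 "real N + 2" 2] by simp
  then have "2 * exp 1 \<le> (real N + 2) ^ 2 * exp 1"
    using mult_right_mono [of 2 "(real N + 2) ^ 2" "exp 1"] by simp
  then have "2 * exp 1 \<le> C"
    by (simp add: C_def mult.commute)
  moreover have "harm n \<le> (real n + 3) / 4" if "N < n" for n
    using harm_le_1_plus_ln [of n] N [of n] that by simp
  moreover have "\<bar>coeff_a (Suc j) - coeff_a j\<bar> \<le> C / (real j * (real j + 1))"
    if "1 \<le> j" "j \<le> N + 1" for j
  proof -
    have "real j * (real j + 1) \<le> (real N + 2) ^ 2"
      unfolding power2_eq_square using that by (intro mult_mono) auto
    then have "exp 1 * (real j * (real j + 1)) \<le> C"
      unfolding C_def by simp
    then have "exp 1 \<le> C / (real j * (real j + 1))"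
      using that by (simp add: pos_le_divide_eq)
    with abs_coeff_a_diff_le_exp1 show ?thesis
      by (rule order_trans)
  qed
  ultimately have "\<bar>coeff_a (Suc j) - coeff_a j\<bar> \<le> C / (real j * (real j + 1))" if "1 \<le> j" for j
    using that by (rule coeff_a_step_bound_induct)
  then show ?thesis
    by (intro exI [of _ C]) auto
qed

lemma coeff_a_shifted_diff_eq:
  "(real n + 2) * ((coeff_a (n + 2) - 1 / (real n + 3)) - (coeff_a (n + 1) - 1 / (real n + 2))) =
     (1 - coeff_a (n + 1)) / (real n + 3) + coeff_a_remainder n"
proof -
  have "(real n + 2) * (1 / (real n + 2) - 1 / (real n + 3)) = 1 / (real n + 3)"
    by (simp add: divide_simps)
  then have "(real n + 2) * ((coeff_a (n + 2) - 1 / (real n + 3)) - (coeff_a (n + 1) - 1 / (real n + 2))) =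
      (real n + 2) * (coeff_a (n + 2) - coeff_a (n + 1)) + 1 / (real n + 3)"
    by (simp add: algebra_simps)
  also have "\<dots> = (1 - coeff_a (n + 1)) / (real n + 3) + coeff_a_remainder n"
    using coeff_a_diff_eq [of n] by (simp add: diff_divide_distrib)
  finally show ?thesis .
qed

context
  fixes C :: real
  assumes coeff_a_step_le:
    "\<And>j. 1 \<le> j \<Longrightarrow> \<bar>coeff_a (Suc j) - coeff_a j\<bar> \<le> C / (real j * (real j + 1))"
begin

lemma coeff_a_step_constant_nonneg: "0 \<le> C"
proof -
  have "\<bar>coeff_a 2 - coeff_a 1\<bar> \<le> C / 2"
    using coeff_a_step_le [of 1] by (simp add: numeral_2_eq_2)
  then show ?thesis
    using abs_ge_zero [of "coeff_a 2 - coeff_a 1"] by linarith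
qed

lemma coeff_a_step_le_telescoping:
  "1 \<le> j \<Longrightarrow> \<bar>coeff_a (Suc j) - coeff_a j\<bar> \<le> C / real j - C / real (Suc j)"
  using coeff_a_step_le [of j] by (simp add: divide_consecutive_product_eq_diff)

lemma coeff_a_tendsto_1: "coeff_a \<longlonglongrightarrow> 1"
proof -
  have "(\<lambda>j. C / real j) \<longlonglongrightarrow> 0"
    by real_asymp
  then have summable: "summable (\<lambda>j. \<bar>coeff_a (Suc j) - coeff_a j\<bar>)"
    using coeff_a_step_le_telescoping by (rule summable_abs_diff_telescoping)
  then obtain L where L: "coeff_a \<longlonglongrightarrow> L"
    using convergent_if_summable_abs_diff by (auto simp: convergent_def)
  have "((\<lambda>x. (1 - x) * (\<Sum>n. coeff_a n * x ^ n)) \<longlongrightarrow> L) (at_left 1)"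
    using summable L by (rule tendsto_one_minus_mult_powser_at_left_1)
  then have "1 = L"
    by (rule tendsto_unique [OF trivial_limit_at_left_real one_minus_mult_powser_coeff_a_tendsto_1])
  with L show ?thesis
    by simp
qed

lemma abs_coeff_a_minus_1_le:
  assumes "1 \<le> n"
  shows "\<bar>coeff_a n - 1\<bar> \<le> C / real n"
proof (rule abs_diff_lim_le_telescoping [OF coeff_a_tendsto_1, where w = "\<lambda>j. C / real j"])
  show "(\<lambda>j. C / real j) \<longlonglongrightarrow> 0"
    by real_asymp
  show "\<bar>coeff_a (Suc k) - coeff_a k\<bar> \<le> C / real k - C / real (Suc k)" if "n \<le> k" for k
    using assms that by (intro coeff_a_step_le_telescoping) simp
qed

lemma coeff_a_refined_step:
  "\<bar>(coeff_a (n + 2) - 1 / (real n + 3)) - (coeff_a (n + 1) - 1 / (real n + 2))\<bar> \<le>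
    (3 * C + exp 1) * (1 + ln (real n + 2)) / ((real n + 1) * (real n + 2) * (real n + 3))"
proof -
  define X where "X = real n"
  define l where "l = ln (X + 2)"
  define D where "D = (coeff_a (n + 2) - 1 / (X + 3)) - (coeff_a (n + 1) - 1 / (X + 2))"
  have X: "0 \<le> X" "0 < X + 1"
    by (simp_all add: X_def)
  have C0: "0 \<le> C" and l0: "0 \<le> l"
    using coeff_a_step_constant_nonneg X by (simp_all add: l_def)
  have harm: "harm n \<le> 1 + l"
    using harm_le_1_plus_ln_add_2 [of n] by (simp add: X_def l_def)
  have R: "\<bar>coeff_a_remainder n\<bar> \<le>
      exp 1 / ((X + 2) * (X + 3)) + 2 * C * harm n / ((X + 1) * (X + 3))"
    unfolding X_def using coeff_a_step_le by (rule abs_coeff_a_remainder_le)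
  have A: "\<bar>1 - coeff_a (n + 1)\<bar> \<le> C / (X + 1)"
    using abs_coeff_a_minus_1_le [of "n + 1"] by (simp add: X_def abs_minus_commute add.commute)
  have "(X + 2) * D = (1 - coeff_a (n + 1)) / (X + 3) + coeff_a_remainder n"
    using coeff_a_shifted_diff_eq [of n] by (simp add: D_def X_def)
  then have "(X + 2) * \<bar>D\<bar> = \<bar>(1 - coeff_a (n + 1)) / (X + 3) + coeff_a_remainder n\<bar>"
    using X by (metis abs_mult abs_of_nonneg add_nonneg_nonneg zero_le_numeral)
  also have "\<dots> \<le> \<bar>1 - coeff_a (n + 1)\<bar> / (X + 3) + \<bar>coeff_a_remainder n\<bar>"
    using X by (simp add: abs_divide abs_triangle_ineq [THEN order_trans])
  also have "\<dots> \<le> (C + exp 1 + 2 * C * harm n) / ((X + 1) * (X + 3))"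
  proof -
    have "\<bar>1 - coeff_a (n + 1)\<bar> / (X + 3) \<le> C / (X + 1) / (X + 3)"
      using A X by (intro divide_right_mono) auto
    moreover have "exp 1 / ((X + 2) * (X + 3)) \<le> exp 1 / ((X + 1) * (X + 3))"
      using X by (intro divide_left_mono mult_right_mono mult_pos_pos) auto
    ultimately show ?thesis
      using R by (simp add: divide_divide_eq_left add_divide_distrib)
  qed
  also have "\<dots> \<le> (3 * C + exp 1) * (1 + l) / ((X + 1) * (X + 3))"
  proof (rule divide_right_mono)
    have "C + exp 1 \<le> (C + exp 1) * (1 + l)"
      using C0 l0 by (simp add: algebra_simps)
    moreover have "2 * C * harm n \<le> 2 * C * (1 + l)"
      using C0 harm by (intro mult_left_mono) auto
    ultimately show "C + exp 1 + 2 * C * harm n \<le> (3 * C + exp 1) * (1 + l)"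
      by (simp add: algebra_simps)
  qed (use X in simp)
  finally have "\<bar>D\<bar> \<le> (3 * C + exp 1) * (1 + l) / ((X + 1) * (X + 3)) / (X + 2)"
    using X by (simp add: pos_le_divide_eq mult.commute)
  then show ?thesis
    by (simp add: D_def X_def l_def divide_divide_eq_left mult_ac)
qed

lemma coeff_a_refined_step_log_weight:
  assumes "1 \<le> m"
  shows "\<bar>(coeff_a (Suc m) - 1 / (real (Suc m) + 1)) - (coeff_a m - 1 / (real m + 1))\<bar> \<le>
    (3 * C + exp 1) * (log_weight m - log_weight (Suc m))"
proof -
  obtain k where k: "m = Suc k"
    using assms by (cases m) auto
  have "(coeff_a (Suc m) - 1 / (real (Suc m) + 1)) - (coeff_a m - 1 / (real m + 1)) =
      (coeff_a (k + 2) - 1 / (real k + 3)) - (coeff_a (k + 1) - 1 / (real k + 2))"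
    by (simp add: k algebra_simps)
  then have "\<bar>(coeff_a (Suc m) - 1 / (real (Suc m) + 1)) - (coeff_a m - 1 / (real m + 1))\<bar> \<le>
      (3 * C + exp 1) * (1 + ln (real k + 2)) / ((real k + 1) * (real k + 2) * (real k + 3))"
    using coeff_a_refined_step [of k] by (simp only:)
  also have "\<dots> = (3 * C + exp 1) * ((1 + ln (real m + 1)) / (real m * (real m + 1) * (real m + 2)))"
    by (simp add: k algebra_simps)
  also have "\<dots> \<le> (3 * C + exp 1) * (log_weight m - log_weight (Suc m))"
    using coeff_a_step_constant_nonneg assms by (intro mult_left_mono log_weight_decrement) auto
  finally show ?thesis .
qed

lemma abs_coeff_a_minus_asymp_le:
  assumes "1 \<le> n"
  shows "\<bar>coeff_a n - (1 + 1 / real n)\<bar> \<le> (3 * C + exp 1 + 1) * log_weight n"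
proof -
  define K where "K = 3 * C + exp 1"
  define x where "x m = coeff_a m - 1 / (real m + 1)" for m
  have "(\<lambda>m. 1 / (real m + 1)) \<longlonglongrightarrow> 0"
    by real_asymp
  then have "x \<longlonglongrightarrow> 1 - 0"
    unfolding x_def by (intro tendsto_intros coeff_a_tendsto_1)
  then have "x \<longlonglongrightarrow> 1"
    by simp
  moreover have "(\<lambda>m. K * log_weight m) \<longlonglongrightarrow> 0"
    unfolding log_weight_def by real_asymp
  moreover have "\<bar>x (Suc m) - x m\<bar> \<le> K * log_weight m - K * log_weight (Suc m)" if "n \<le> m" for m
    using coeff_a_refined_step_log_weight [of m] that assms by (simp add: x_def K_def right_diff_distrib)
  ultimately have "\<bar>x n - 1\<bar> \<le> K * log_weight n"
    by (rule abs_diff_lim_le_telescoping)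
  moreover have "coeff_a n - (1 + 1 / real n) = (x n - 1) - 1 / (real n * (real n + 1))"
    using assms by (simp add: x_def divide_simps) (simp add: algebra_simps)
  moreover have "0 \<le> 1 / (real n * (real n + 1))"
    by simp
  moreover have "1 / (real n * (real n + 1)) \<le> log_weight n"
    using assms unfolding log_weight_def by (intro divide_right_mono) auto
  moreover have "(3 * C + exp 1 + 1) * log_weight n = K * log_weight n + log_weight n"
    by (simp add: K_def distrib_right)
  ultimately show ?thesis
    unfolding abs_le_iff by linarith
qed

end

lemma coeff_a_asymptotics:
  "(\<lambda>n. coeff_a n - (1 + 1 / real n)) \<in> O(\<lambda>n. ln (real n) / real n ^ 2)"
proof -
  obtain C where C: "\<And>j. 1 \<le> j \<Longrightarrow> \<bar>coeff_a (Suc j) - coeff_a j\<bar> \<le> C / (real j * (real j + 1))"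
    using coeff_a_step_bound by blast
  have "(\<lambda>n. coeff_a n - (1 + 1 / real n)) \<in> O(log_weight)"
  proof (rule bigoI [where c = "3 * C + exp 1 + 1"], rule eventually_mono [OF eventually_ge_at_top [of 1]])
    fix n :: nat
    assume "1 \<le> n"
    moreover have "0 \<le> log_weight n"
      by (simp add: log_weight_def)
    ultimately show "norm (coeff_a n - (1 + 1 / real n)) \<le> (3 * C + exp 1 + 1) * norm (log_weight n)"
      using abs_coeff_a_minus_asymp_le [OF C] by simp
  qed
  also have "log_weight \<in> O(\<lambda>n. ln (real n) / real n ^ 2)"
    unfolding log_weight_def by real_asymp
  finally show ?thesis .
qed

theorem mainTheorem1:
  shows "(\<forall>x::real. x > 1 \<longrightarrow>
            (\<lambda>j. coeff_c j / x ^ j) sums ((1 + 1 / x) powr x))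
       \<and> (\<lambda>j. coeff_c j - (-1) ^ j * (1 + 1 / real j))
            \<in> O(\<lambda>j. ln (real j) / (real j) ^ 2)"
proof (intro conjI allI impI)
  fix x :: real
  assume "x > 1"
  then have "(\<lambda>j. coeff_c j * (1 / x) ^ j) sums ((1 + 1 / x) powr (1 / (1 / x)))"
    by (intro coeff_c_sums_powr) auto
  then show "(\<lambda>j. coeff_c j / x ^ j) sums ((1 + 1 / x) powr x)"
    by (simp add: power_one_over)
next
  have "(\<lambda>j. (-1) ^ j * (coeff_a j - (1 + 1 / real j))) \<in> O(\<lambda>j. 1 * (ln (real j) / real j ^ 2))"
    using coeff_a_asymptotics by (intro landau_o.big.mult) (auto intro!: bigoI [of _ 1])
  then show "(\<lambda>j. coeff_c j - (-1) ^ j * (1 + 1 / real j)) \<in> O(\<lambda>j. ln (real j) / (real j) ^ 2)"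
    by (simp add: coeff_c_eq_coeff_a algebra_simps)
qed

end
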